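(* Let $0\le\gamma_1<\dots<\gamma_p\le1$, $\boldsymbol\alpha=(\alpha_1,\dots,\alpha_p)\in(0,1)^p$ with $\sum_i\alpha_i=1$, and for each $i$ let $(\gamma_{i,n})_n$ be $[0,1]$-valued with $|\gamma_{i,n}-\gamma_i|=O(1/n)$. Let $\phi_{n,\boldsymbol\alpha,\boldsymbol\gamma_n}(u)=\sum_{i=1}^p\alpha_i\phi_{n,\gamma_{i,n}}(u)$. Then for every $\epsilon>0$ there exists $N\in\mathbb{N}$ such that for all $n\ge N$, $\phi_{n,\boldsymbol\alpha,\boldsymbol\gamma_n}'$ is convex on each of the nonempty intervals $[0,\gamma_1-\epsilon]$, $[\gamma_i+\epsilon,\gamma_{i+1}-\epsilon]$ ($1\le i\le p-1$), and $[\gamma_p+\epsilon,1]$.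
   Context: $[x]$ is the integer part. $\phi_{n,\alpha}(t)=\sum_{j=1+[(n-1)\alpha]}^n\binom{n}{j}t^j(1-t)^{n-j}$, $t\in[0,1]$. *)

theory Defs
  imports "HOL-Analysis.Analysis" "HOL-Library.Landau_Symbols"
begin

definition phi :: "nat \<Rightarrow> real \<Rightarrow> real \<Rightarrow> real" where
  "phi n a t = (\<Sum>j = nat (1 + \<lfloor>(real n - 1) * a\<rfloor>)..n.
       real (n choose j) * t ^ j * (1 - t) ^ (n - j))"

definition phi_mix :: "nat \<Rightarrow> (nat \<Rightarrow> real) \<Rightarrow> (nat \<Rightarrow> nat \<Rightarrow> real) \<Rightarrow> nat \<Rightarrow> real \<Rightarrow> real" where
  "phi_mix p alpha gam n u = (\<Sum>i = 1..p. alpha i * phi n (gam i n) u)"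

end

theory Submission
  imports Defs
begin

text \<open>
  The derivative of \<open>phi (m + 1) a\<close> telescopes to \<open>m + 1\<close> times the single Bernstein
  polynomial \<open>Bernstein m k\<close> with \<open>k = \<lfloor>m a\<rfloor>\<close>. The second derivative of \<open>t^k (1 - t)^(m - k)\<close>
  is \<open>t^(k - 2) (1 - t)^(m - k - 2) ((k - m t)^2 - k (1 - t)^2 - (m - k) t^2)\<close>, which is
  nonnegative wherever \<open>(k - m t)^2 \<ge> m\<close>. As \<open>gam i n = gamma i + O(1/n)\<close>, the index \<open>k\<close> of
  the \<open>i\<close>-th summand is \<open>m gamma i + O(1)\<close>, so at distance \<open>\<epsilon>\<close> from \<open>gamma i\<close> we get
  \<open>|k - m t| \<ge> \<epsilon> m - O(1) \<ge> sqrt m\<close> for large \<open>m\<close>. Hence every summand of the derivative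
  of the mixture is eventually convex on each interval that stays \<open>\<epsilon>\<close> away from all \<open>gamma i\<close>.
\<close>

lemma has_real_derivative_Bernstein_Suc_Suc:
  "(Bernstein (Suc m) (Suc i) has_real_derivative
     real (Suc m) * (Bernstein m i t - Bernstein m (Suc i) t)) (at t)"
proof -
  define c where "c = real (Suc m choose Suc i)"
  have "Bernstein (Suc m) (Suc i) = (\<lambda>t. c * t ^ Suc i * (1 - t) ^ (m - i))"
    by (rule ext) (simp only: Bernstein_def c_def diff_Suc_Suc)
  moreover have "((\<lambda>t. c * t ^ Suc i * (1 - t) ^ (m - i)) has_real_derivative
      (c * real (Suc i)) * t ^ i * (1 - t) ^ (m - i) - (c * real (m - i)) * t ^ Suc i * (1 - t) ^ (m - Suc i)) (at t)"
    by (rule derivative_eq_intros refl)+ (simp add: algebra_simps)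
  moreover have "c * real (Suc i) = real (Suc m) * real (m choose i)"
    unfolding c_def by (metis Suc_times_binomial mult.commute of_nat_mult)
  moreover have "c * real (m - i) = real (Suc m) * real (m choose Suc i)"
    unfolding c_def by (metis binomial_absorb_comp diff_Suc_Suc diff_Suc_1 mult.commute of_nat_mult)
  ultimately show ?thesis
    by (simp only: Bernstein_def right_diff_distrib mult.assoc)
qed

lemma phi_Suc_eq_sum_Bernstein:
  assumes "0 \<le> a"
  shows "phi (Suc m) a = (\<lambda>t. \<Sum>i = nat \<lfloor>real m * a\<rfloor>..m. Bernstein (Suc m) (Suc i) t)"
proof -
  have "nat (1 + \<lfloor>(real (Suc m) - 1) * a\<rfloor>) = Suc (nat \<lfloor>real m * a\<rfloor>)"
    using assms by (simp add: Suc_nat_eq_nat_zadd1 add.commute)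
  then show ?thesis
    by (intro ext) (simp only: phi_def Bernstein_def sum.shift_bounds_cl_Suc_ivl)
qed

lemma has_real_derivative_phi_Suc:
  assumes "0 \<le> a" "a \<le> 1"
  shows "(phi (Suc m) a has_real_derivative real (Suc m) * Bernstein m (nat \<lfloor>real m * a\<rfloor>) t) (at t)"
proof -
  define k where "k = nat \<lfloor>real m * a\<rfloor>"
  have "k \<le> m"
  proof -
    have "\<lfloor>real m * a\<rfloor> \<le> \<lfloor>real m\<rfloor>"
      using assms by (intro floor_mono) (simp add: mult_left_le)
    then show ?thesis unfolding k_def by simp
  qed
  have "(phi (Suc m) a has_real_derivative
      (\<Sum>i = k..m. real (Suc m) * (Bernstein m i t - Bernstein m (Suc i) t))) (at t)"
    unfolding phi_Suc_eq_sum_Bernstein[OF assms(1)] k_def[symmetric]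
    by (intro DERIV_sum has_real_derivative_Bernstein_Suc_Suc)
  also have "(\<Sum>i = k..m. real (Suc m) * (Bernstein m i t - Bernstein m (Suc i) t))
      = real (Suc m) * (Bernstein m k t - Bernstein m (Suc m) t)"
    using sum_Suc_diff[of k m "\<lambda>i. - Bernstein m i t"] \<open>k \<le> m\<close>
    by (simp add: sum_distrib_left[symmetric])
  also have "Bernstein m (Suc m) t = 0"
    by (simp add: Bernstein_def)
  finally show ?thesis
    unfolding k_def by simp
qed

lemma power_mult_power_derivative_eq:
  fixes t :: real
  assumes "0 < t" "t < 1"
  shows "real a * t ^ (a - 1) * (1 - t) ^ b - real b * t ^ a * (1 - t) ^ (b - 1)
    = t ^ a * (1 - t) ^ b * (real a / t - real b / (1 - t))"
  using assms by (cases a; cases b) (simp_all add: field_simps)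

lemma has_real_derivative_power_mult_power_derivative:
  fixes a b :: nat and s :: real
  assumes "0 < s" "s < 1"
  shows "((\<lambda>t. real a * t ^ (a - 1) * (1 - t) ^ b - real b * t ^ a * (1 - t) ^ (b - 1)) has_real_derivative
    s ^ a * (1 - s) ^ b * (((real a - real (a + b) * s)\<^sup>2 - real a * (1 - s)\<^sup>2 - real b * s\<^sup>2)
      / (s\<^sup>2 * (1 - s)\<^sup>2))) (at s)"
proof -
  \<comment> \<open>Differentiate the factorisation \<open>f * q\<close> valid on \<open>{0<..<1}\<close> (\<open>q\<close> the logarithmic
    derivative of \<open>f\<close>); this avoids the truncated exponents \<open>a - 1\<close> and \<open>b - 1\<close>.\<close>
  define f where "f t = t ^ a * (1 - t) ^ b" for t :: real
  define q where "q t = real a / t - real b / (1 - t)" for t :: real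
  have s0: "s \<noteq> 0" and s1: "1 - s \<noteq> 0"
    using assms by auto
  have "(f has_real_derivative real a * s ^ (a - 1) * (1 - s) ^ b - real b * s ^ a * (1 - s) ^ (b - 1)) (at s)"
    unfolding f_def by (rule derivative_eq_intros refl)+ (simp add: algebra_simps)
  then have df: "(f has_real_derivative f s * q s) (at s)"
    using power_mult_power_derivative_eq[OF assms] by (simp add: f_def q_def)
  have dq: "(q has_real_derivative - real a / s\<^sup>2 - real b / (1 - s)\<^sup>2) (at s)"
    unfolding q_def using s0 s1 by (auto intro!: derivative_eq_intros simp: power2_eq_square)
  have "q s ^ 2 - real a / s\<^sup>2 - real b / (1 - s)\<^sup>2
      = ((real a - real (a + b) * s)\<^sup>2 - real a * (1 - s)\<^sup>2 - real b * s\<^sup>2) / (s\<^sup>2 * (1 - s)\<^sup>2)"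
    unfolding q_def using s0 s1 by (simp add: divide_simps power2_eq_square) (simp add: algebra_simps)
  then have "f s * q s * q s + (- real a / s\<^sup>2 - real b / (1 - s)\<^sup>2) * f s
      = f s * (((real a - real (a + b) * s)\<^sup>2 - real a * (1 - s)\<^sup>2 - real b * s\<^sup>2) / (s\<^sup>2 * (1 - s)\<^sup>2))"
    by (simp add: power2_eq_square algebra_simps)
  with DERIV_mult[OF df dq] have "((\<lambda>t. f t * q t) has_real_derivative
      s ^ a * (1 - s) ^ b * (((real a - real (a + b) * s)\<^sup>2 - real a * (1 - s)\<^sup>2 - real b * s\<^sup>2) / (s\<^sup>2 * (1 - s)\<^sup>2))) (at s)"
    by (simp add: f_def[of s])
  then show ?thesis
  proof (rule has_field_derivative_transform_within_open)
    show "s \<in> {0<..<1}" "open {0<..<1::real}"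
      using assms by auto
  qed (simp add: power_mult_power_derivative_eq[symmetric] f_def q_def)
qed

lemma power_mult_power_second_derivative_numerator_nonneg:
  fixes a b :: nat and s :: real
  assumes "0 \<le> s" "s \<le> 1" "real (a + b) \<le> (real a - real (a + b) * s)\<^sup>2"
  shows "0 \<le> (real a - real (a + b) * s)\<^sup>2 - real a * (1 - s)\<^sup>2 - real b * s\<^sup>2"
proof -
  have "(1 - s)\<^sup>2 \<le> 1" "s\<^sup>2 \<le> 1"
    using assms by (auto simp: power_le_one)
  then have "real a * (1 - s)\<^sup>2 \<le> real a" "real b * s\<^sup>2 \<le> real b"
    by (simp_all add: mult_left_le)
  then show ?thesis
    using assms(3) of_nat_add[of a b] by linarith
qed

lemma convex_on_power_mult_power:
  fixes a b :: nat and lo hi :: real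
  assumes "0 \<le> lo" "hi \<le> 1"
    and far: "\<And>t. t \<in> {lo..hi} \<Longrightarrow> real (a + b) \<le> (real a - real (a + b) * t)\<^sup>2"
  shows "convex_on {lo..hi} (\<lambda>t. t ^ a * (1 - t) ^ b)"
proof (rule convex_on_realI)
  let ?f' = "\<lambda>t. real a * t ^ (a - 1) * (1 - t) ^ b - real b * t ^ a * (1 - t) ^ (b - 1)"
  show "((\<lambda>t. t ^ a * (1 - t) ^ b) has_real_derivative ?f' t) (at t)" for t
    by (rule derivative_eq_intros refl)+ (simp add: algebra_simps)
  show "?f' x \<le> ?f' y" if "x \<in> {lo..hi}" "y \<in> {lo..hi}" "x \<le> y" for x y
  proof (rule DERIV_nonneg_imp_increasing_open[OF \<open>x \<le> y\<close>])
    show "continuous_on {x..y} ?f'"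
      by (intro continuous_intros)
    fix s assume "x < s" "s < y"
    then have s: "0 < s" "s < 1" "s \<in> {lo..hi}"
      using that assms(1,2) by auto
    have "0 \<le> (real a - real (a + b) * s)\<^sup>2 - real a * (1 - s)\<^sup>2 - real b * s\<^sup>2"
      using s by (intro power_mult_power_second_derivative_numerator_nonneg far) auto
    then have "0 \<le> s ^ a * (1 - s) ^ b * (((real a - real (a + b) * s)\<^sup>2 - real a * (1 - s)\<^sup>2
        - real b * s\<^sup>2) / (s\<^sup>2 * (1 - s)\<^sup>2))"
      using s by (intro mult_nonneg_nonneg divide_nonneg_nonneg) auto
    then show "\<exists>D. (?f' has_real_derivative D) (at s) \<and> 0 \<le> D"
      using has_real_derivative_power_mult_power_derivative[OF s(1,2)] by blast
  qed
qed simp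

lemma convex_on_Bernstein:
  assumes "0 \<le> lo" "hi \<le> 1"
    and "\<And>t. t \<in> {lo..hi} \<Longrightarrow> real m \<le> (real k - real m * t)\<^sup>2"
  shows "convex_on {lo..hi} (Bernstein m k)"
proof (cases "k \<le> m")
  case True
  then have "convex_on {lo..hi} (\<lambda>t. t ^ k * (1 - t) ^ (m - k))"
    using assms by (intro convex_on_power_mult_power) auto
  then have "convex_on {lo..hi} (\<lambda>t. real (m choose k) * (t ^ k * (1 - t) ^ (m - k)))"
    by (intro convex_on_cmul) auto
  then show ?thesis
    by (simp add: Bernstein_def [abs_def] mult.assoc)
next
  case False
  then show ?thesis
    by (simp add: Bernstein_def [abs_def] binomial_eq_0 convex_on_const)
qed

lemma convex_on_sum_fun:
  assumes "finite I" "convex A" "\<And>i. i \<in> I \<Longrightarrow> convex_on A (f i)"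
  shows "convex_on A (\<lambda>x. \<Sum>i\<in>I. f i x)"
  using assms(1,3)
proof (induction I rule: finite_induct)
  case empty
  then show ?case
    using assms(2) by (simp add: convex_on_const)
next
  case (insert j I)
  then show ?case
    by (simp add: convex_on_add)
qed

lemma floor_scaled_far_from_scaled_point:
  fixes g \<gamma> t \<epsilon> c :: real and m :: nat
  assumes "0 \<le> g" and close: "real m * \<bar>g - \<gamma>\<bar> \<le> c" and far: "\<epsilon> \<le> \<bar>t - \<gamma>\<bar>"
    and large: "2 * c + 2 \<le> \<epsilon> * real m" "4 \<le> \<epsilon>\<^sup>2 * real m"
  shows "real m \<le> (real (nat \<lfloor>real m * g\<rfloor>) - real m * t)\<^sup>2"
proof -
  define k where "k = real (nat \<lfloor>real m * g\<rfloor>)"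
  have "k = of_int \<lfloor>real m * g\<rfloor>"
    unfolding k_def using \<open>0 \<le> g\<close> by simp
  then have "\<bar>real m * g - k\<bar> \<le> 1"
    by (simp add: abs_le_iff) linarith
  then have "real m * \<bar>t - g\<bar> \<le> \<bar>k - real m * t\<bar> + 1"
    using abs_triangle_ineq[of "k - real m * t" "real m * g - k"]
    by (simp add: abs_mult abs_minus_commute right_diff_distrib[symmetric])
  moreover have "\<epsilon> \<le> \<bar>t - g\<bar> + \<bar>g - \<gamma>\<bar>"
    using far abs_triangle_ineq[of "t - g" "g - \<gamma>"] by simp
  then have "\<epsilon> * real m \<le> real m * \<bar>t - g\<bar> + real m * \<bar>g - \<gamma>\<bar>"
    by (metis distrib_left mult.commute mult_left_mono of_nat_0_le_iff)
  ultimately have lower: "\<epsilon> * real m \<le> 2 * \<bar>k - real m * t\<bar>"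
    using close large(1) by (smt (verit))
  have "0 \<le> real m * \<bar>g - \<gamma>\<bar>"
    by simp
  then have "0 \<le> \<epsilon> * real m"
    using close large(1) by linarith
  then have "(\<epsilon> * real m)\<^sup>2 \<le> 4 * (k - real m * t)\<^sup>2"
    using power_mono[OF lower, of 2] by (simp add: power_mult_distrib)
  moreover have "4 * real m \<le> (\<epsilon> * real m)\<^sup>2"
    using mult_right_mono[OF large(2), of "real m"] by (simp add: power2_eq_square mult_ac)
  ultimately show ?thesis
    unfolding k_def by linarith
qed

lemma eventually_floor_scaled_far_from_scaled_point:
  fixes g :: "nat \<Rightarrow> real" and \<gamma> \<epsilon> :: real
  assumes rate: "(\<lambda>n. g n - \<gamma>) \<in> O(\<lambda>n. 1 / real n)" and "\<And>n. 0 \<le> g n" and "0 < \<epsilon>"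
  shows "eventually (\<lambda>m. \<forall>t. \<epsilon> \<le> \<bar>t - \<gamma>\<bar> \<longrightarrow>
      real m \<le> (real (nat \<lfloor>real m * g (Suc m)\<rfloor>) - real m * t)\<^sup>2) sequentially"
proof -
  obtain c where "eventually (\<lambda>n. norm (g n - \<gamma>) \<le> c * norm (1 / real n)) sequentially"
    using rate by (elim landau_o.bigE)
  then have "eventually (\<lambda>n. \<bar>g n - \<gamma>\<bar> \<le> c / real n) sequentially"
    by simp
  then have "eventually (\<lambda>m. \<bar>g (Suc m) - \<gamma>\<bar> \<le> c / real (Suc m)) sequentially"
    by (rule eventually_sequentially_Suc[THEN iffD2])
  then have close: "eventually (\<lambda>m. real m * \<bar>g (Suc m) - \<gamma>\<bar> \<le> c) sequentially"
  proof eventually_elim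
    case (elim m)
    have "real m * \<bar>g (Suc m) - \<gamma>\<bar> \<le> real (Suc m) * \<bar>g (Suc m) - \<gamma>\<bar>"
      by (intro mult_right_mono) auto
    also have "\<dots> \<le> c"
      using elim by (simp add: field_simps)
    finally show ?case .
  qed
  have "eventually (\<lambda>m. max ((2 * c + 2) / \<epsilon>) (4 / \<epsilon>\<^sup>2) \<le> real m) sequentially"
    using filterlim_real_sequentially by (simp only: filterlim_at_top)
  then have large: "eventually (\<lambda>m. 2 * c + 2 \<le> \<epsilon> * real m \<and> 4 \<le> \<epsilon>\<^sup>2 * real m) sequentially"
    by eventually_elim (use \<open>0 < \<epsilon>\<close> in \<open>auto simp: field_simps\<close>)
  from close large show ?thesis
    by eventually_elim (use floor_scaled_far_from_scaled_point assms(2) in blast)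
qed

lemma deriv_phi_mix_Suc:
  assumes "\<And>i. i \<in> {1..p} \<Longrightarrow> 0 \<le> gam i (Suc m) \<and> gam i (Suc m) \<le> 1"
  shows "deriv (phi_mix p alpha gam (Suc m))
    = (\<lambda>t. \<Sum>i = 1..p. alpha i * (real (Suc m) * Bernstein m (nat \<lfloor>real m * gam i (Suc m)\<rfloor>) t))"
proof
  fix t
  have "(phi_mix p alpha gam (Suc m) has_real_derivative
      (\<Sum>i = 1..p. alpha i * (real (Suc m) * Bernstein m (nat \<lfloor>real m * gam i (Suc m)\<rfloor>) t))) (at t)"
    unfolding phi_mix_def [abs_def] using assms
    by (intro DERIV_sum DERIV_cmult has_real_derivative_phi_Suc) auto
  then show "deriv (phi_mix p alpha gam (Suc m)) t
      = (\<Sum>i = 1..p. alpha i * (real (Suc m) * Bernstein m (nat \<lfloor>real m * gam i (Suc m)\<rfloor>) t))"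
    by (rule DERIV_imp_deriv)
qed

lemma convex_on_deriv_phi_mix_Suc:
  assumes "\<And>i. i \<in> {1..p} \<Longrightarrow> 0 \<le> alpha i"
    and "\<And>i. i \<in> {1..p} \<Longrightarrow> 0 \<le> gam i (Suc m) \<and> gam i (Suc m) \<le> 1"
    and "0 \<le> lo" "hi \<le> 1"
    and "\<And>i t. i \<in> {1..p} \<Longrightarrow> t \<in> {lo..hi} \<Longrightarrow>
      real m \<le> (real (nat \<lfloor>real m * gam i (Suc m)\<rfloor>) - real m * t)\<^sup>2"
  shows "convex_on {lo..hi} (deriv (phi_mix p alpha gam (Suc m)))"
proof -
  have "convex_on {lo..hi}
      (\<lambda>t. \<Sum>i = 1..p. alpha i * (real (Suc m) * Bernstein m (nat \<lfloor>real m * gam i (Suc m)\<rfloor>) t))"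
  proof (rule convex_on_sum_fun)
    fix i assume "i \<in> {1..p}"
    then have "convex_on {lo..hi} (Bernstein m (nat \<lfloor>real m * gam i (Suc m)\<rfloor>))"
      using assms(3-5) by (intro convex_on_Bernstein) auto
    then show "convex_on {lo..hi}
        (\<lambda>t. alpha i * (real (Suc m) * Bernstein m (nat \<lfloor>real m * gam i (Suc m)\<rfloor>) t))"
      using assms(1) \<open>i \<in> {1..p}\<close> by (intro convex_on_cmul) auto
  qed auto
  then show ?thesis
    by (simp only: deriv_phi_mix_Suc[where p = p and gam = gam and m = m, OF assms(2)])
qed

lemma eventually_convex_on_deriv_phi_mix:
  fixes alpha gamma :: "nat \<Rightarrow> real" and gam :: "nat \<Rightarrow> nat \<Rightarrow> real"
  assumes "\<And>i. i \<in> {1..p} \<Longrightarrow> 0 \<le> alpha i"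
    and range: "\<And>i n. i \<in> {1..p} \<Longrightarrow> 0 \<le> gam i n \<and> gam i n \<le> 1"
    and "\<And>i. i \<in> {1..p} \<Longrightarrow> (\<lambda>n. gam i n - gamma i) \<in> O(\<lambda>n. 1 / real n)"
    and "0 < \<epsilon>"
  shows "eventually (\<lambda>n. \<forall>lo hi. 0 \<le> lo \<longrightarrow> hi \<le> 1 \<longrightarrow>
      (\<forall>i\<in>{1..p}. gamma i + \<epsilon> \<le> lo \<or> hi \<le> gamma i - \<epsilon>) \<longrightarrow>
      convex_on {lo..hi} (deriv (phi_mix p alpha gam n))) sequentially"
proof -
  have "eventually (\<lambda>m. \<forall>i\<in>{1..p}. \<forall>t. \<epsilon> \<le> \<bar>t - gamma i\<bar> \<longrightarrow>
      real m \<le> (real (nat \<lfloor>real m * gam i (Suc m)\<rfloor>) - real m * t)\<^sup>2) sequentially"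
    using assms by (intro eventually_ball_finite ballI eventually_floor_scaled_far_from_scaled_point) auto
  then have "eventually (\<lambda>m. \<forall>lo hi. 0 \<le> lo \<longrightarrow> hi \<le> 1 \<longrightarrow>
      (\<forall>i\<in>{1..p}. gamma i + \<epsilon> \<le> lo \<or> hi \<le> gamma i - \<epsilon>) \<longrightarrow>
      convex_on {lo..hi} (deriv (phi_mix p alpha gam (Suc m)))) sequentially"
  proof eventually_elim
    case (elim m)
    show ?case
    proof (intro allI impI)
      fix lo hi :: real
      assume "0 \<le> lo" "hi \<le> 1" and avoid: "\<forall>i\<in>{1..p}. gamma i + \<epsilon> \<le> lo \<or> hi \<le> gamma i - \<epsilon>"
      have "\<epsilon> \<le> \<bar>t - gamma i\<bar>" if "i \<in> {1..p}" "t \<in> {lo..hi}" for i t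
        using avoid that by fastforce
      then show "convex_on {lo..hi} (deriv (phi_mix p alpha gam (Suc m)))"
        using elim assms(1) range \<open>0 \<le> lo\<close> \<open>hi \<le> 1\<close> by (intro convex_on_deriv_phi_mix_Suc) auto
    qed
  qed
  then show ?thesis
    by (rule eventually_sequentially_Suc[THEN iffD1])
qed

theorem lemma5p3:
  fixes p :: nat and gamma alpha :: "nat \<Rightarrow> real" and gam :: "nat \<Rightarrow> nat \<Rightarrow> real"
  assumes p_pos: "p \<ge> 1"
    and gamma_mono: "\<forall>i\<in>{1..<p}. gamma i < gamma (Suc i)"
    and gamma_lo: "0 \<le> gamma 1" and gamma_hi: "gamma p \<le> 1"
    and alpha_range: "\<forall>i\<in>{1..p}. 0 < alpha i \<and> alpha i < 1"
    and alpha_sum: "(\<Sum>i = 1..p. alpha i) = 1"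
    and gam_range: "\<forall>i\<in>{1..p}. \<forall>n. 0 \<le> gam i n \<and> gam i n \<le> 1"
    and gam_rate: "\<forall>i\<in>{1..p}. (\<lambda>n. gam i n - gamma i) \<in> O(\<lambda>n. 1 / real n)"
  shows "\<forall>\<epsilon>>0. \<exists>N::nat. \<forall>n\<ge>N.
     convex_on {0 .. gamma 1 - \<epsilon>} (deriv (phi_mix p alpha gam n)) \<and>
     (\<forall>i\<in>{1..<p}. convex_on {gamma i + \<epsilon> .. gamma (Suc i) - \<epsilon>} (deriv (phi_mix p alpha gam n))) \<and>
     convex_on {gamma p + \<epsilon> .. 1} (deriv (phi_mix p alpha gam n))"
proof (intro allI impI)
  fix \<epsilon> :: real
  assume "\<epsilon> > 0"
  have gamma_le: "gamma i \<le> gamma j" if "1 \<le> i" "i \<le> j" "j \<le> p" for i j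
  proof (rule lift_Suc_mono_le_ivl[where N = "{1..<p}"])
    show "\<And>n. n \<in> {1..<p} \<Longrightarrow> gamma n \<le> gamma (Suc n)"
      using gamma_mono by (simp add: less_imp_le)
  qed (use that in auto)
  have "eventually (\<lambda>n. \<forall>lo hi. 0 \<le> lo \<longrightarrow> hi \<le> 1 \<longrightarrow>
      (\<forall>i\<in>{1..p}. gamma i + \<epsilon> \<le> lo \<or> hi \<le> gamma i - \<epsilon>) \<longrightarrow>
      convex_on {lo..hi} (deriv (phi_mix p alpha gam n))) sequentially"
    using alpha_range gam_range gam_rate \<open>\<epsilon> > 0\<close>
    by (intro eventually_convex_on_deriv_phi_mix) (auto simp: less_imp_le)
  then obtain N where N: "\<And>n lo hi. N \<le> n \<Longrightarrow> 0 \<le> lo \<Longrightarrow> hi \<le> 1 \<Longrightarrow>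
      (\<forall>i\<in>{1..p}. gamma i + \<epsilon> \<le> lo \<or> hi \<le> gamma i - \<epsilon>) \<Longrightarrow>
      convex_on {lo..hi} (deriv (phi_mix p alpha gam n))"
    unfolding eventually_sequentially by blast
  have "gamma 1 \<le> gamma p"
    using gamma_le p_pos by simp
  show "\<exists>N. \<forall>n\<ge>N.
     convex_on {0 .. gamma 1 - \<epsilon>} (deriv (phi_mix p alpha gam n)) \<and>
     (\<forall>i\<in>{1..<p}. convex_on {gamma i + \<epsilon> .. gamma (Suc i) - \<epsilon>} (deriv (phi_mix p alpha gam n))) \<and>
     convex_on {gamma p + \<epsilon> .. 1} (deriv (phi_mix p alpha gam n))"
  proof (intro exI allI impI conjI ballI)
    fix n assume "N \<le> n"
    show "convex_on {0 .. gamma 1 - \<epsilon>} (deriv (phi_mix p alpha gam n))"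
      using gamma_le \<open>gamma 1 \<le> gamma p\<close> gamma_hi \<open>\<epsilon> > 0\<close> by (intro N[OF \<open>N \<le> n\<close>]) auto
    show "convex_on {gamma p + \<epsilon> .. 1} (deriv (phi_mix p alpha gam n))"
      using gamma_le \<open>gamma 1 \<le> gamma p\<close> gamma_lo \<open>\<epsilon> > 0\<close> by (intro N[OF \<open>N \<le> n\<close>]) auto
    fix i assume i: "i \<in> {1..<p}"
    then have "gamma j \<le> gamma i \<or> gamma (Suc i) \<le> gamma j" if "j \<in> {1..p}" for j
      using gamma_le that by (cases "j \<le> i") auto
    then show "convex_on {gamma i + \<epsilon> .. gamma (Suc i) - \<epsilon>} (deriv (phi_mix p alpha gam n))"
      using gamma_le[of 1 i] gamma_le[of "Suc i" p] i gamma_lo gamma_hi \<open>\<epsilon> > 0\<close>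
      by (intro N[OF \<open>N \<le> n\<close>]) fastforce+
  qed
qed

end
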